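(* Let $G$ be a $k$-terminal directed acyclic graph with unit edge lengths and let $P\subseteq K\times K$ be a set of terminal pairs $(s,t)$ such that $t$ is reachable from $s$ in $G$. Let $\pi$ be a consistent shortest-path tie-breaking scheme in $G$, and let $H$ be the subgraph of $G$ formed by the union of the directed paths $\pi(s,t)$ over all $(s,t)\in P$. Then $H$ has at most $|P|(|P|-1)/2$ branching events.
   Context: A shortest-path tie-breaking scheme is a function $\pi$ mapping every ordered pair of vertices $(s,t)$ with $t$ reachable from $s$ to a fixed shortest directed path from $s$ to $t$ (lengths measured in number of edges); $d(\cdot,\cdot)$ denotes the directed shortest-path distance. It is consistent if for all vertices $y,x,x',y'$: whenever $x,x'$ lie on $\pi(y,y')$ with $d(y,x)<d(y,x')$, the path $\pi(x,x')$ is a subpath of $\pi(y,y')$. A branching event in a digraph is a set $\{(u_1,v),(u_2,v)\}$ of two distinct directed edges entering the same vertex $v$. *)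

theory Defs
  imports Main "HOL-Library.Sublist"
begin

text \<open>Paths are nonempty vertex lists; all edges have unit length, so the length of a
  path is its number of edges, length p - 1.\<close>

definition is_path :: "('a \<times> 'a) set \<Rightarrow> 'a list \<Rightarrow> 'a \<Rightarrow> 'a \<Rightarrow> bool" where
  "is_path E p s t \<longleftrightarrow> p \<noteq> [] \<and> hd p = s \<and> last p = t \<and>
     (\<forall>i. Suc i < length p \<longrightarrow> (p ! i, p ! Suc i) \<in> E)"

definition dist :: "('a \<times> 'a) set \<Rightarrow> 'a \<Rightarrow> 'a \<Rightarrow> nat" where
  "dist E s t = (LEAST n. \<exists>p. is_path E p s t \<and> length p = Suc n)"

definition shortest_path :: "('a \<times> 'a) set \<Rightarrow> 'a list \<Rightarrow> 'a \<Rightarrow> 'a \<Rightarrow> bool" where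
  "shortest_path E p s t \<longleftrightarrow> is_path E p s t \<and> length p - 1 = dist E s t"

definition path_edges :: "'a list \<Rightarrow> ('a \<times> 'a) set" where
  "path_edges p = set (zip p (tl p))"

definition tie_breaking :: "'a set \<Rightarrow> ('a \<times> 'a) set \<Rightarrow> ('a \<times> 'a \<Rightarrow> 'a list) \<Rightarrow> bool" where
  "tie_breaking V E \<pi> \<longleftrightarrow>
     (\<forall>s\<in>V. \<forall>t\<in>V. (s, t) \<in> E\<^sup>* \<longrightarrow> shortest_path E (\<pi> (s, t)) s t)"

definition consistent :: "'a set \<Rightarrow> ('a \<times> 'a) set \<Rightarrow> ('a \<times> 'a \<Rightarrow> 'a list) \<Rightarrow> bool" where
  "consistent V E \<pi> \<longleftrightarrow>
     (\<forall>y\<in>V. \<forall>y'\<in>V. \<forall>x x'. (y, y') \<in> E\<^sup>* \<longrightarrow>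
        x \<in> set (\<pi> (y, y')) \<longrightarrow> x' \<in> set (\<pi> (y, y')) \<longrightarrow> dist E y x < dist E y x' \<longrightarrow>
        sublist (\<pi> (x, x')) (\<pi> (y, y')))"

definition union_edges :: "('a \<times> 'a \<Rightarrow> 'a list) \<Rightarrow> ('a \<times> 'a) set \<Rightarrow> ('a \<times> 'a) set" where
  "union_edges \<pi> P = (\<Union>st\<in>P. path_edges (\<pi> st))"

definition branching_events :: "('a \<times> 'a) set \<Rightarrow> ('a \<times> 'a) set set" where
  "branching_events F =
     {{e1, e2} | e1 e2. e1 \<in> F \<and> e2 \<in> F \<and> e1 \<noteq> e2 \<and> snd e1 = snd e2}"

end

theory Submission
  imports Defs
begin

text \<open>Paths in a DAG are simple, so two edges of one path never enter the same vertex: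
  every branching event of \<open>H\<close> is made of edges of two different paths \<open>\<pi>(a)\<close>, \<open>\<pi>(b)\<close>.
  Each pair \<open>{a, b}\<close> contributes at most one event. Its entering vertex lies on both paths;
  if there were events at two different vertices \<open>u\<close> and later \<open>v\<close>, consistency would
  make both paths contain \<open>\<pi>(u, v)\<close>, so both would enter \<open>v\<close> through its last edge.\<close>

lemma path_edges_iff_nth:
  "(a, b) \<in> path_edges p \<longleftrightarrow> (\<exists>i. Suc i < length p \<and> p ! i = a \<and> p ! Suc i = b)"
proof
  assume "(a, b) \<in> path_edges p"
  then obtain n where "p ! n = a" "tl p ! n = b" "n < length (tl p)"
    unfolding path_edges_def in_set_zip by auto
  then show "\<exists>i. Suc i < length p \<and> p ! i = a \<and> p ! Suc i = b"
    by (intro exI[of _ n]) (auto simp: nth_tl)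
next
  assume "\<exists>i. Suc i < length p \<and> p ! i = a \<and> p ! Suc i = b"
  then show "(a, b) \<in> path_edges p"
    unfolding path_edges_def in_set_zip by (auto simp: nth_tl)
qed

lemma path_edges_snd_in_set: "(a, b) \<in> path_edges p \<Longrightarrow> b \<in> set p"
  unfolding path_edges_iff_nth by auto

lemma finite_path_edges: "finite (path_edges p)"
  unfolding path_edges_def by simp

lemma sublist_path_edges_subset:
  assumes "sublist r p"
  shows "path_edges r \<subseteq> path_edges p"
proof
  fix e assume "e \<in> path_edges r"
  then obtain i where i: "Suc i < length r" "e = (r ! i, r ! Suc i)"
    by (cases e) (auto simp: path_edges_iff_nth)
  obtain ps ss where "p = ps @ r @ ss" using assms unfolding sublist_def by blast
  with i have "Suc (length ps + i) < length p" "e = (p ! (length ps + i), p ! Suc (length ps + i))"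
    by (auto simp: nth_append)
  then show "e \<in> path_edges p" by (auto simp: path_edges_iff_nth)
qed

lemma distinct_path_edges_same_target:
  assumes "distinct p" "(a, v) \<in> path_edges p" "(b, v) \<in> path_edges p"
  shows "a = b"
  using assms unfolding path_edges_iff_nth by (metis nth_eq_iff_index_eq Suc_inject)

lemma is_path_nth_trancl:
  assumes "is_path E p s t" "i < j" "j < length p"
  shows "(p ! i, p ! j) \<in> E\<^sup>+"
  using assms(2,3)
proof (induction j)
  case 0
  then show ?case by simp
next
  case (Suc j)
  have "(p ! j, p ! Suc j) \<in> E" using assms(1) Suc.prems unfolding is_path_def by blast
  with Suc show ?case by (cases "i = j") (auto intro: trancl_into_trancl)
qed

lemma is_path_distinct:
  assumes "acyclic E" "is_path E p s t"
  shows "distinct p"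
proof -
  have "p ! i \<noteq> p ! j" if "i < j" "j < length p" for i j
    using is_path_nth_trancl[OF assms(2) that] assms(1) unfolding acyclic_def by force
  then show ?thesis unfolding distinct_conv_nth by (metis linorder_neqE_nat)
qed

lemma is_path_comparable:
  assumes "is_path E p s t" "x \<in> set p" "y \<in> set p" "x \<noteq> y"
  shows "(x, y) \<in> E\<^sup>+ \<or> (y, x) \<in> E\<^sup>+"
proof -
  obtain i j where "i < length p" "p ! i = x" "j < length p" "p ! j = y"
    using assms(2,3) by (auto simp: in_set_conv_nth)
  with assms(4) show ?thesis
    using is_path_nth_trancl[OF assms(1)] by (metis linorder_neqE_nat)
qed

lemma is_path_set_subset:
  assumes "E \<subseteq> V \<times> V" "s \<in> V" "is_path E p s t"
  shows "set p \<subseteq> V"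
proof
  fix x assume "x \<in> set p"
  then obtain i where i: "i < length p" "x = p ! i" by (auto simp: in_set_conv_nth)
  show "x \<in> V"
  proof (cases i)
    case 0
    then show ?thesis using assms i unfolding is_path_def by (metis hd_conv_nth)
  next
    case (Suc j)
    then have "(p ! j, x) \<in> E" using assms(3) i unfolding is_path_def by auto
    then show ?thesis using assms(1) by auto
  qed
qed

lemma is_path_last_edge:
  assumes "is_path E p s t" "s \<noteq> t"
  shows "\<exists>w. (w, t) \<in> path_edges p"
proof -
  have "p \<noteq> []" "hd p = s" "last p = t" using assms(1) unfolding is_path_def by auto
  with assms(2) have "2 \<le> length p" by (cases p) (auto simp: Suc_le_eq)
  moreover have "Suc (length p - 2) = length p - 1" using \<open>2 \<le> length p\<close> by simp
  ultimately have "Suc (length p - 2) < length p" "p ! Suc (length p - 2) = t"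
    using \<open>p \<noteq> []\<close> \<open>last p = t\<close> by (auto simp: last_conv_nth)
  then show ?thesis unfolding path_edges_iff_nth by blast
qed

lemma is_path_take:
  assumes "is_path E p s t" "i < length p"
  shows "is_path E (take (Suc i) p) s (p ! i)"
  using assms unfolding is_path_def by (auto simp: hd_take last_conv_nth)

lemma is_path_drop:
  assumes "is_path E p s t" "i < length p"
  shows "is_path E (drop i p) (p ! i) t"
  using assms unfolding is_path_def by (auto simp: hd_drop_conv_nth)

lemma is_path_append:
  assumes "is_path E q s u" "is_path E r u t"
  shows "is_path E (q @ tl r) s t"
proof -
  have q: "q \<noteq> []" "hd q = s" "last q = u" "\<And>i. Suc i < length q \<Longrightarrow> (q ! i, q ! Suc i) \<in> E"
    using assms(1) unfolding is_path_def by auto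
  have r: "r \<noteq> []" "hd r = u" "last r = t" "\<And>i. Suc i < length r \<Longrightarrow> (r ! i, r ! Suc i) \<in> E"
    using assms(2) unfolding is_path_def by auto
  have "((q @ tl r) ! k, (q @ tl r) ! Suc k) \<in> E" if k: "Suc k < length (q @ tl r)" for k
  proof -
    consider "Suc k < length q" | "Suc k = length q" | m where "k = length q + m"
      using le_Suc_ex[of "length q" k] by (cases "length q \<le> k"; cases "Suc k < length q") auto
    then show ?thesis
    proof cases
      case 1
      then show ?thesis using q by (simp add: nth_append)
    next
      case 2
      then have "k = length q - 1" by simp
      then have "(q @ tl r) ! k = r ! 0" "(q @ tl r) ! Suc k = r ! 1"
        using q r k 2 by (auto simp: nth_append nth_tl last_conv_nth hd_conv_nth)
      then show ?thesis using r(4)[of 0] 2 k by simp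
    next
      case 3
      then show ?thesis using r(4)[of "Suc m"] k by (simp add: nth_append nth_tl)
    qed
  qed
  moreover have "last (q @ tl r) = t"
    using q r by (cases r) (auto simp: last_append)
  ultimately show ?thesis using q unfolding is_path_def by simp
qed

lemma dist_le_length:
  assumes "is_path E p s t"
  shows "dist E s t \<le> length p - 1"
proof -
  have "p \<noteq> []" using assms unfolding is_path_def by auto
  then have "\<exists>q. is_path E q s t \<and> length q = Suc (length p - 1)" using assms by auto
  then show ?thesis unfolding dist_def by (rule Least_le)
qed

lemma dist_path_exists:
  assumes "is_path E p s t"
  shows "\<exists>q. is_path E q s t \<and> length q = Suc (dist E s t)"
  unfolding dist_def
proof (rule LeastI_ex)
  have "p \<noteq> []" using assms unfolding is_path_def by auto
  then show "\<exists>n q. is_path E q s t \<and> length q = Suc n"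
    using assms by (intro exI[of _ "length p - 1"] exI[of _ p]) simp
qed

text \<open>A prefix of a shortest path is shortest: otherwise splicing a shorter one onto
  the remaining suffix would shorten the whole path.\<close>
lemma shortest_path_dist_nth:
  assumes "shortest_path E p s t" "i < length p"
  shows "dist E s (p ! i) = i"
proof -
  have p: "is_path E p s t" and len: "length p - 1 = dist E s t"
    using assms(1) unfolding shortest_path_def by auto
  have prefix: "is_path E (take (Suc i) p) s (p ! i)" using is_path_take[OF p assms(2)] .
  obtain q where q: "is_path E q s (p ! i)" "length q = Suc (dist E s (p ! i))"
    using dist_path_exists[OF prefix] by blast
  have "is_path E (q @ tl (drop i p)) s t"
    using is_path_append[OF q(1) is_path_drop[OF p assms(2)]] .
  from dist_le_length[OF this] have "dist E s t \<le> length q + (length p - i - 1) - 1"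
    by simp
  moreover have "dist E s (p ! i) \<le> i" using dist_le_length[OF prefix] assms(2) by simp
  ultimately show ?thesis using q(2) len assms(2) by linarith
qed

lemma tie_breaking_shortest_path:
  assumes "tie_breaking V E \<pi>" "s \<in> V" "t \<in> V" "(s, t) \<in> E\<^sup>*"
  shows "shortest_path E (\<pi> (s, t)) s t"
  using assms unfolding tie_breaking_def by blast

lemma tie_breaking_is_path:
  assumes "tie_breaking V E \<pi>" "s \<in> V" "t \<in> V" "(s, t) \<in> E\<^sup>*"
  shows "is_path E (\<pi> (s, t)) s t"
  using tie_breaking_shortest_path[OF assms] unfolding shortest_path_def by blast

lemma consistent_sublist:
  assumes "acyclic E" "tie_breaking V E \<pi>" "consistent V E \<pi>"
    and "s \<in> V" "t \<in> V" "(s, t) \<in> E\<^sup>*"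
    and "u \<in> set (\<pi> (s, t))" "v \<in> set (\<pi> (s, t))" "(u, v) \<in> E\<^sup>+"
  shows "sublist (\<pi> (u, v)) (\<pi> (s, t))"
proof -
  let ?p = "\<pi> (s, t)"
  have sp: "shortest_path E ?p s t" using tie_breaking_shortest_path assms(2,4-6) .
  then have p: "is_path E ?p s t" unfolding shortest_path_def by blast
  obtain i j where ij: "i < length ?p" "?p ! i = u" "j < length ?p" "?p ! j = v"
    using assms(7,8) by (auto simp: in_set_conv_nth)
  have "i < j"
  proof (rule ccontr)
    assume "\<not> i < j"
    then have "(v, u) \<in> E\<^sup>*"
      using is_path_nth_trancl[OF p _ ij(1)] ij by (metis linorder_neqE_nat trancl_into_rtrancl rtrancl.rtrancl_refl)
    with assms(1,9) show False unfolding acyclic_def by (meson rtrancl_trancl_trancl)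
  qed
  then have "dist E s u < dist E s v" using shortest_path_dist_nth[OF sp] ij by metis
  with assms(3-8) show ?thesis unfolding consistent_def by blast
qed

lemma consistent_common_entering_edge:
  assumes "E \<subseteq> V \<times> V" "acyclic E" "tie_breaking V E \<pi>" "consistent V E \<pi>"
    and "s1 \<in> V" "t1 \<in> V" "(s1, t1) \<in> E\<^sup>*" "s2 \<in> V" "t2 \<in> V" "(s2, t2) \<in> E\<^sup>*"
    and "u \<in> set (\<pi> (s1, t1))" "v \<in> set (\<pi> (s1, t1))"
    and "u \<in> set (\<pi> (s2, t2))" "v \<in> set (\<pi> (s2, t2))"
    and "(u, v) \<in> E\<^sup>+"
  shows "\<exists>w. (w, v) \<in> path_edges (\<pi> (s1, t1)) \<and> (w, v) \<in> path_edges (\<pi> (s2, t2))"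
proof -
  have "set (\<pi> (s1, t1)) \<subseteq> V"
    using is_path_set_subset[OF assms(1,5) tie_breaking_is_path[OF assms(3,5-7)]] .
  with assms(11,12) have "u \<in> V" "v \<in> V" by auto
  then have "is_path E (\<pi> (u, v)) u v"
    using tie_breaking_is_path[OF assms(3)] assms(15) by (simp add: trancl_into_rtrancl)
  moreover have "u \<noteq> v" using assms(2,15) unfolding acyclic_def by blast
  ultimately obtain w where w: "(w, v) \<in> path_edges (\<pi> (u, v))"
    using is_path_last_edge by metis
  have "sublist (\<pi> (u, v)) (\<pi> (s1, t1))"
    using consistent_sublist[OF assms(2-7,11,12,15)] .
  moreover have "sublist (\<pi> (u, v)) (\<pi> (s2, t2))"
    using consistent_sublist[OF assms(2-4,8-10,13-15)] .
  ultimately show ?thesis using w sublist_path_edges_subset by blast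
qed

lemma finite_branching_events:
  "finite F \<Longrightarrow> finite (branching_events F)"
  by (rule finite_subset[of _ "Pow F"]) (auto simp: branching_events_def)

lemma finite_union_edges: "finite P \<Longrightarrow> finite (union_edges \<pi> P)"
  unfolding union_edges_def by (simp add: finite_path_edges)

lemma branching_event_between:
  assumes "distinct p" "distinct q" "X \<in> branching_events (path_edges p \<union> path_edges q)"
  shows "\<exists>w1 w2 v. X = {(w1, v), (w2, v)} \<and> w1 \<noteq> w2 \<and>
    (w1, v) \<in> path_edges p \<and> (w2, v) \<in> path_edges q"
proof -
  obtain w1 w2 v where X: "X = {(w1, v), (w2, v)}" "w1 \<noteq> w2"
      and e1: "(w1, v) \<in> path_edges p \<union> path_edges q"
      and e2: "(w2, v) \<in> path_edges p \<union> path_edges q"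
    using assms(3) unfolding branching_events_def by (auto simp: prod_eq_iff)
  have not_both_p: "\<not> ((w1, v) \<in> path_edges p \<and> (w2, v) \<in> path_edges p)"
    using X(2) distinct_path_edges_same_target[OF assms(1)] by blast
  have not_both_q: "\<not> ((w1, v) \<in> path_edges q \<and> (w2, v) \<in> path_edges q)"
    using X(2) distinct_path_edges_same_target[OF assms(2)] by blast
  show ?thesis
  proof (cases "(w1, v) \<in> path_edges p")
    case True
    then show ?thesis using X e2 not_both_p by blast
  next
    case False
    then have "X = {(w2, v), (w1, v)}" "(w2, v) \<in> path_edges p" "(w1, v) \<in> path_edges q"
      using X e1 e2 not_both_q by auto
    then show ?thesis using X(2) by blast
  qed
qed

lemma card_branching_events_pair_le_1:
  assumes "E \<subseteq> V \<times> V" "acyclic E" "tie_breaking V E \<pi>" "consistent V E \<pi>"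
    and "s1 \<in> V" "t1 \<in> V" "(s1, t1) \<in> E\<^sup>*" "s2 \<in> V" "t2 \<in> V" "(s2, t2) \<in> E\<^sup>*"
  shows "card (branching_events (union_edges \<pi> {(s1, t1), (s2, t2)})) \<le> 1"
proof -
  let ?p = "\<pi> (s1, t1)" and ?q = "\<pi> (s2, t2)"
  let ?B = "branching_events (path_edges ?p \<union> path_edges ?q)"
  have p: "is_path E ?p s1 t1" using tie_breaking_is_path[OF assms(3,5-7)] .
  have q: "is_path E ?q s2 t2" using tie_breaking_is_path[OF assms(3,8-10)] .
  have dist: "distinct ?p" "distinct ?q"
    using is_path_distinct[OF assms(2) p] is_path_distinct[OF assms(2) q] .
  have no_later_branching: "w1 = w2"
    if w1: "(w1, v) \<in> path_edges ?p" and w2: "(w2, v) \<in> path_edges ?q"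
      and u: "u \<in> set ?p" "u \<in> set ?q" and uv: "(u, v) \<in> E\<^sup>+" for u v w1 w2
  proof -
    obtain w where "(w, v) \<in> path_edges ?p" "(w, v) \<in> path_edges ?q"
      using consistent_common_entering_edge[OF assms u(1) path_edges_snd_in_set[OF w1]
          u(2) path_edges_snd_in_set[OF w2] uv] by blast
    then show ?thesis
      using distinct_path_edges_same_target[OF dist(1) w1] distinct_path_edges_same_target[OF dist(2) w2]
      by simp
  qed
  have "X = Y" if XB: "X \<in> ?B" and YB: "Y \<in> ?B" for X Y
  proof -
    obtain w1 w2 v where X: "X = {(w1, v), (w2, v)}" "w1 \<noteq> w2"
        "(w1, v) \<in> path_edges ?p" "(w2, v) \<in> path_edges ?q"
      using branching_event_between[OF dist XB] by blast
    obtain x1 x2 v' where Y: "Y = {(x1, v'), (x2, v')}" "x1 \<noteq> x2"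
        "(x1, v') \<in> path_edges ?p" "(x2, v') \<in> path_edges ?q"
      using branching_event_between[OF dist YB] by blast
    have in_both: "v \<in> set ?p" "v \<in> set ?q" "v' \<in> set ?p" "v' \<in> set ?q"
      using X(3,4) Y(3,4) by (simp_all add: path_edges_snd_in_set)
    have "v = v'"
    proof (rule ccontr)
      assume "v \<noteq> v'"
      then consider "(v, v') \<in> E\<^sup>+" | "(v', v) \<in> E\<^sup>+"
        using is_path_comparable[OF p in_both(1,3)] by blast
      then show False
      proof cases
        case 1
        then show False using no_later_branching[OF Y(3,4) in_both(1,2)] Y(2) by blast
      next
        case 2
        then show False using no_later_branching[OF X(3,4) in_both(3,4)] X(2) by blast
      qed
    qed
    then have "x1 = w1" "x2 = w2"
      using distinct_path_edges_same_target[OF dist(1) Y(3)] X(3)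
        distinct_path_edges_same_target[OF dist(2) Y(4)] X(4) by simp_all
    then show ?thesis using X(1) Y(1) \<open>v = v'\<close> by simp
  qed
  moreover have "finite ?B" by (simp add: finite_branching_events finite_path_edges)
  ultimately show ?thesis unfolding union_edges_def by (simp add: card_le_Suc0_iff_eq)
qed

lemma branching_events_union_edges_subset:
  assumes "\<And>a. a \<in> P \<Longrightarrow> distinct (\<pi> a)"
  shows "branching_events (union_edges \<pi> P)
    \<subseteq> (\<Union>A \<in> {A. A \<subseteq> P \<and> card A = 2}. branching_events (union_edges \<pi> A))"
proof
  fix X assume "X \<in> branching_events (union_edges \<pi> P)"
  then obtain e1 e2 a b where X: "X = {e1, e2}" "e1 \<noteq> e2" "snd e1 = snd e2"
      "a \<in> P" "e1 \<in> path_edges (\<pi> a)" "b \<in> P" "e2 \<in> path_edges (\<pi> b)"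
    unfolding branching_events_def union_edges_def by blast
  have "a \<noteq> b"
    using X assms distinct_path_edges_same_target by (metis prod.collapse prod.inject)
  then have "{a, b} \<in> {A. A \<subseteq> P \<and> card A = 2}" using X by auto
  moreover have "X \<in> branching_events (union_edges \<pi> {a, b})"
    using X unfolding branching_events_def union_edges_def by blast
  ultimately show "X \<in> (\<Union>A \<in> {A. A \<subseteq> P \<and> card A = 2}. branching_events (union_edges \<pi> A))"
    by blast
qed

theorem mainTheorem5:
  fixes V :: "'a set" and E :: "('a \<times> 'a) set" and K :: "'a set" and k :: nat
    and P :: "('a \<times> 'a) set" and \<pi> :: "'a \<times> 'a \<Rightarrow> 'a list"
  assumes "finite V" and "E \<subseteq> V \<times> V" and "acyclic E"
    and "K \<subseteq> V" and "card K = k"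
    and "P \<subseteq> K \<times> K" and "\<forall>(s, t)\<in>P. (s, t) \<in> E\<^sup>*"
    and "tie_breaking V E \<pi>" and "consistent V E \<pi>"
  shows "card (branching_events (union_edges \<pi> P)) \<le> card P * (card P - 1) div 2"
proof -
  let ?pairs = "{A. A \<subseteq> P \<and> card A = 2}"
  have P: "\<And>s t. (s, t) \<in> P \<Longrightarrow> s \<in> V \<and> t \<in> V \<and> (s, t) \<in> E\<^sup>*" using assms(4,6,7) by blast
  have "finite P" using assms(1,4,6) by (meson finite_SigmaI finite_subset)
  have "\<And>a. a \<in> P \<Longrightarrow> distinct (\<pi> a)"
    using P tie_breaking_is_path[OF assms(8)] is_path_distinct[OF assms(3)] by fast
  then have "card (branching_events (union_edges \<pi> P))
      \<le> card (\<Union>A \<in> ?pairs. branching_events (union_edges \<pi> A))"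
    using \<open>finite P\<close> by (intro card_mono branching_events_union_edges_subset)
      (auto intro!: finite_branching_events finite_union_edges intro: finite_subset)
  also have "\<dots> \<le> (\<Sum>A \<in> ?pairs. card (branching_events (union_edges \<pi> A)))"
    using \<open>finite P\<close> by (intro card_UN_le) simp
  also have "\<dots> \<le> (\<Sum>A \<in> ?pairs. 1)"
  proof (rule sum_mono)
    fix A assume "A \<in> ?pairs"
    then obtain s1 t1 s2 t2 where "A = {(s1, t1), (s2, t2)}" "(s1, t1) \<in> P" "(s2, t2) \<in> P"
      by (auto simp: card_2_iff)
    then show "card (branching_events (union_edges \<pi> A)) \<le> 1"
      using card_branching_events_pair_le_1[OF assms(2,3,8,9)] P by blast
  qed
  also have "\<dots> = card P choose 2" using n_subsets[OF \<open>finite P\<close>] by simp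
  finally show ?thesis unfolding choose_two .
qed

end
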